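(* For each combinatorial line $L$ of $\mathrm{HJ}(d,n)$, there is an affine function $g_L:\mathbb{R}^5\to\mathbb{R}$ that vanishes on $\nu(P_L)$ and is positive on $\nu(P\setminus P_L)$. Hence $\conv(\nu(P_L))$ is a face of $\conv(\nu(P))$.
   Context: Combinatorial lines and $\mathrm{HJ}(d,n)$: for $\tau\in([d]\cup\{*\})^n\setminus[d]^n$ and $k\in\mathbb{R}$, $\sigma(\tau,k)$ is $\tau$ with every $*$ replaced by $k$; the combinatorial line is $L_\tau=\{\sigma(\tau,k):k\in[d]\}$, and $\mathrm{HJ}(d,n)$ is the hypergraph on $[d]^n$ whose hyperedges are all combinatorial lines. Choose vectors $v_1,\dots,v_n\in\mathbb{R}^2$, each with positive $x$-component, and for $\sigma\in\mathbb{R}^n$ set $p_\sigma=\sum_{i=1}^n\sigma_i v_i$; the $v_i$ are (after perturbation) such that the points $p_\sigma$, $\sigma\in[d]^n$, are distinct. Let $P=\{p_\sigma:\sigma\in[d]^n\}$. For a combinatorial line $L=L_\tau$, let $P_L=\{p_\sigma:\sigma\in L\}$ and let $S_L=\{p_{\sigma(\tau,t)}:t\in\mathbb{R}\}$ be the affine span of $P_L$, a line $y=a_Lx+b_L$ of finite slope. The $v_i$ are further assumed (after perturbation) to satisfy $S_L\cap P=P_L$ for every combinatorial line $L$. The map $\nu:\mathbb{R}^2\to\mathbb{R}^5$ is $\nu(x,y)=(x^2,xy,y^2,x,y)$. *)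

theory Defs
  imports "HOL-Analysis.Analysis"
begin

text \<open>Words of [d]^n are real lists of length n with entries in {1..d} (coordinate i is
  the list entry at index i-1). A pattern tau is an option list: None stands for the
  wildcard *.\<close>

definition cube :: "nat \<Rightarrow> nat \<Rightarrow> real list set" where
  "cube d n = {\<sigma>. length \<sigma> = n \<and> set \<sigma> \<subseteq> real ` {1..d}}"

definition patterns :: "nat \<Rightarrow> nat \<Rightarrow> nat option list set" where
  "patterns d n = {\<tau>. length \<tau> = n \<and> set \<tau> \<subseteq> insert None (Some ` {1..d}) \<and> None \<in> set \<tau>}"

definition subst_star :: "nat option list \<Rightarrow> real \<Rightarrow> real list" where
  "subst_star \<tau> t = map (\<lambda>e. case e of None \<Rightarrow> t | Some k \<Rightarrow> real k) \<tau>"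

definition comb_line :: "nat \<Rightarrow> nat option list \<Rightarrow> real list set" where
  "comb_line d \<tau> = {subst_star \<tau> (real k) | k. k \<in> {1..d}}"

definition pt :: "(nat \<Rightarrow> real \<times> real) \<Rightarrow> real list \<Rightarrow> real \<times> real" where
  "pt v \<sigma> = (\<Sum>i<length \<sigma>. (\<sigma> ! i) *\<^sub>R v i)"

definition span_line :: "(nat \<Rightarrow> real \<times> real) \<Rightarrow> nat option list \<Rightarrow> (real \<times> real) set" where
  "span_line v \<tau> = {pt v (subst_star \<tau> t) | t. True}"

definition nu :: "real \<times> real \<Rightarrow> real ^ 5" where
  "nu p = (case p of (x, y) \<Rightarrow> vector [x\<^sup>2, x * y, y\<^sup>2, x, y])"

definition affine_fun :: "('a::real_inner \<Rightarrow> real) \<Rightarrow> bool" where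
  "affine_fun g \<longleftrightarrow> (\<exists>a b. \<forall>x. g x = inner a x + b)"

end

theory Submission
  imports Defs
begin

text \<open>Along a combinatorial line only the starred coordinates move, so the points
  p_\<sigma> of the line lie on the affine line through p_\<sigma>(\<tau>,0) with direction
  w = \<Sum>{v_i : \<tau>_i = *}, whose x-component is positive. If c(x,y) = 0 is an equation
  of that line, then c^2 is a quadratic polynomial in x and y, i.e. an affine function
  of \<nu>(x,y). It vanishes exactly on the line, hence on \<nu>(P_L), and is positive on
  \<nu>(P \ P_L) because S_L \<inter> P = P_L. A finite point set split by such a function
  into a zero part and a positive part spans a face of its convex hull.\<close>

lemma exhaust_5:
  fixes x :: 5
  shows "x = 1 \<or> x = 2 \<or> x = 3 \<or> x = 4 \<or> x = 5"
proof (induct x)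
  case (of_int z)
  then have "z = 0 \<or> z = 1 \<or> z = 2 \<or> z = 3 \<or> z = 4" by fastforce
  then show ?case by auto
qed

lemma UNIV_5: "UNIV = {1, 2, 3, 4, 5::5}"
  using exhaust_5 by auto

lemma inner_vector_5:
  "inner (vector [a1, a2, a3, a4, a5] :: real^5) (vector [b1, b2, b3, b4, b5])
     = a1 * b1 + a2 * b2 + a3 * b3 + a4 * b4 + a5 * b5"
  unfolding inner_vec_def UNIV_5 by (simp add: vector_def)

lemma affine_fun_nu_square:
  "\<exists>g. affine_fun g \<and> (\<forall>q. g (nu q) = (a * fst q + b * snd q + k)\<^sup>2)"
proof (intro exI conjI allI)
  let ?A = "vector [a\<^sup>2, 2 * a * b, b\<^sup>2, 2 * a * k, 2 * b * k] :: real^5"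
  show "affine_fun (\<lambda>z. inner ?A z + k\<^sup>2)"
    unfolding affine_fun_def by blast
  fix q :: "real \<times> real"
  show "inner ?A (nu q) + k\<^sup>2 = (a * fst q + b * snd q + k)\<^sup>2"
    by (cases q) (simp add: nu_def inner_vector_5 power2_eq_square algebra_simps)
qed

lemma on_line_iff_det_eq_0:
  fixes p q w :: "real \<times> real"
  assumes "w \<noteq> 0"
  shows "q \<in> range (\<lambda>t. p + t *\<^sub>R w) \<longleftrightarrow> fst w * (snd q - snd p) = snd w * (fst q - fst p)"
proof
  assume "q \<in> range (\<lambda>t. p + t *\<^sub>R w)"
  then show "fst w * (snd q - snd p) = snd w * (fst q - fst p)"
    by (auto simp: algebra_simps)
next
  assume det: "fst w * (snd q - snd p) = snd w * (fst q - fst p)"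
  have "q = p + ((fst q - fst p) / fst w) *\<^sub>R w" if "fst w \<noteq> 0"
  proof -
    have "snd q = snd p + (fst q - fst p) / fst w * snd w"
      using det that by (simp add: field_simps)
    then show ?thesis
      using that by (simp add: prod_eq_iff)
  qed
  moreover have "q = p + ((snd q - snd p) / snd w) *\<^sub>R w" if "snd w \<noteq> 0"
  proof -
    have "fst q = fst p + (snd q - snd p) / snd w * fst w"
      using det that by (simp add: field_simps)
    then show ?thesis
      using that by (simp add: prod_eq_iff)
  qed
  moreover have "fst w \<noteq> 0 \<or> snd w \<noteq> 0"
    using assms by (simp add: prod_eq_iff)
  ultimately show "q \<in> range (\<lambda>t. p + t *\<^sub>R w)"
    by blast
qed

lemma affine_fun_nu_line:
  fixes p w :: "real \<times> real"
  assumes "w \<noteq> 0"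
  obtains g :: "real^5 \<Rightarrow> real"
  where "affine_fun g"
    and "\<And>q. g (nu q) = 0 \<longleftrightarrow> q \<in> range (\<lambda>t. p + t *\<^sub>R w)"
    and "\<And>q. g (nu q) \<ge> 0"
proof -
  obtain g where "affine_fun g"
    and g: "\<And>q. g (nu q) = (- snd w * fst q + fst w * snd q + (snd w * fst p - fst w * snd p))\<^sup>2"
    using affine_fun_nu_square by blast
  moreover have "g (nu q) = 0 \<longleftrightarrow> q \<in> range (\<lambda>t. p + t *\<^sub>R w)" for q
    unfolding g on_line_iff_det_eq_0[OF assms] by (auto simp: algebra_simps)
  ultimately show thesis
    using that g by simp
qed

lemma face_of_convex_hull_zero_set:
  fixes S T :: "'a::euclidean_space set" and g :: "'a \<Rightarrow> real"
  assumes "finite S" "T \<subseteq> S" "affine_fun g"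
    and zero: "\<forall>x\<in>T. g x = 0" and pos: "\<forall>x\<in>S - T. g x > 0"
  shows "(convex hull T) face_of (convex hull S)"
proof (rule face_of_convex_hulls)
  obtain a b where g: "\<And>x. g x = inner a x + b"
    using \<open>affine_fun g\<close> by (auto simp: affine_fun_def)
  have "affine hull T \<subseteq> {x. inner a x = - b}"
    by (rule hull_minimal) (use zero in \<open>auto simp: g affine_hyperplane\<close>)
  moreover have "convex hull (S - T) \<subseteq> {x. inner a x > - b}"
  proof (rule hull_minimal)
    show "S - T \<subseteq> {x. inner a x > - b}"
    proof
      fix x assume "x \<in> S - T"
      then have "inner a x + b > 0"
        using pos by (simp add: g)
      then show "x \<in> {x. inner a x > - b}"
        by simp
    qed
  qed (rule convex_halfspace_gt)
  ultimately show "affine hull T \<inter> convex hull (S - T) = {}"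
    by force
qed (use assms in auto)

lemma length_subst_star [simp]: "length (subst_star \<tau> t) = length \<tau>"
  by (simp add: subst_star_def)

definition star_direction :: "(nat \<Rightarrow> real \<times> real) \<Rightarrow> nat option list \<Rightarrow> real \<times> real" where
  "star_direction v \<tau> = (\<Sum>i<length \<tau>. (if \<tau> ! i = None then 1 else 0) *\<^sub>R v i)"

lemma pt_subst_star:
  "pt v (subst_star \<tau> t) = pt v (subst_star \<tau> 0) + t *\<^sub>R star_direction v \<tau>"
proof -
  have "(subst_star \<tau> t ! i) *\<^sub>R v i =
      (subst_star \<tau> 0 ! i) *\<^sub>R v i + t *\<^sub>R ((if \<tau> ! i = None then 1 else 0) *\<^sub>R v i)"
    if "i < length \<tau>" for i
    using that by (auto simp: subst_star_def scaleR_add_left split: option.splits)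
  then show ?thesis
    unfolding pt_def star_direction_def by (simp add: sum.distrib scaleR_right.sum)
qed

lemma span_line_eq:
  "span_line v \<tau> = range (\<lambda>t. pt v (subst_star \<tau> 0) + t *\<^sub>R star_direction v \<tau>)"
proof -
  have "span_line v \<tau> = range (\<lambda>t. pt v (subst_star \<tau> t))"
    by (simp add: span_line_def full_SetCompr_eq)
  also have "(\<lambda>t. pt v (subst_star \<tau> t)) = (\<lambda>t. pt v (subst_star \<tau> 0) + t *\<^sub>R star_direction v \<tau>)"
    using pt_subst_star by blast
  finally show ?thesis .
qed

lemma pt_comb_line_subset_span_line: "pt v ` comb_line d \<tau> \<subseteq> span_line v \<tau>"
  unfolding comb_line_def span_line_def by auto

lemma fst_star_direction_pos:
  assumes "\<tau> \<in> patterns d n" and "\<forall>i<n. fst (v i) > 0"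
  shows "fst (star_direction v \<tau>) > 0"
proof -
  obtain i0 where "i0 < n" "\<tau> ! i0 = None"
    using assms(1) by (auto simp: patterns_def in_set_conv_nth)
  moreover have "length \<tau> = n"
    using assms(1) by (simp add: patterns_def)
  ultimately show ?thesis
    unfolding star_direction_def fst_sum
    by (intro sum_pos2[of _ i0]) (use assms(2) in auto)
qed

lemma finite_cube: "finite (cube d n)"
proof -
  have "finite {xs. set xs \<subseteq> real ` {1..d} \<and> length xs = n}"
    by (rule finite_lists_length_eq) auto
  then show ?thesis
    by (rule finite_subset[rotated]) (auto simp: cube_def)
qed

lemma comb_line_subset_cube:
  assumes "\<tau> \<in> patterns d n"
  shows "comb_line d \<tau> \<subseteq> cube d n"
  using assms
  by (fastforce simp: comb_line_def cube_def patterns_def subst_star_def split: option.splits)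

lemma comb_line_separating_affine_fun:
  assumes \<tau>: "\<tau> \<in> patterns d n" and pos: "\<forall>i<n. fst (v i) > 0"
    and line: "span_line v \<tau> \<inter> pt v ` cube d n = pt v ` comb_line d \<tau>"
  obtains g :: "real^5 \<Rightarrow> real"
  where "affine_fun g"
    and "\<forall>q\<in>nu ` pt v ` comb_line d \<tau>. g q = 0"
    and "\<forall>q\<in>nu ` (pt v ` cube d n - pt v ` comb_line d \<tau>). g q > 0"
proof -
  have w: "star_direction v \<tau> \<noteq> 0"
    using fst_star_direction_pos[OF \<tau> pos] by auto
  obtain g :: "real^5 \<Rightarrow> real" where "affine_fun g"
    and g_zero_iff: "\<And>q. g (nu q) = 0 \<longleftrightarrow> q \<in> span_line v \<tau>"
    and g_nonneg: "\<And>q. g (nu q) \<ge> 0"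
    using affine_fun_nu_line[OF w, of "pt v (subst_star \<tau> 0)"] unfolding span_line_eq by blast
  have zero: "\<forall>q\<in>nu ` pt v ` comb_line d \<tau>. g q = 0"
    using pt_comb_line_subset_span_line g_zero_iff by blast
  have positive: "\<forall>q\<in>nu ` (pt v ` cube d n - pt v ` comb_line d \<tau>). g q > 0"
  proof
    fix q assume "q \<in> nu ` (pt v ` cube d n - pt v ` comb_line d \<tau>)"
    then obtain r where q: "q = nu r" and "r \<in> pt v ` cube d n" "r \<notin> pt v ` comb_line d \<tau>"
      by blast
    then have "r \<notin> span_line v \<tau>"
      using line by blast
    then show "g q > 0"
      using g_zero_iff[of r] g_nonneg[of r] q by simp
  qed
  show thesis
    using \<open>affine_fun g\<close> zero positive by (rule that)
qed

theorem lemma2p4: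
  fixes d n :: nat and v :: "nat \<Rightarrow> real \<times> real"
  assumes pos: "\<forall>i<n. fst (v i) > 0"
    and distinct: "inj_on (pt v) (cube d n)"
    and lines: "\<forall>\<tau>\<in>patterns d n.
                  span_line v \<tau> \<inter> pt v ` cube d n = pt v ` comb_line d \<tau>"
  shows "\<forall>\<tau>\<in>patterns d n.
           (\<exists>g :: real ^ 5 \<Rightarrow> real. affine_fun g
              \<and> (\<forall>q\<in>nu ` pt v ` comb_line d \<tau>. g q = 0)
              \<and> (\<forall>q\<in>nu ` (pt v ` cube d n - pt v ` comb_line d \<tau>). g q > 0))
         \<and> (convex hull (nu ` pt v ` comb_line d \<tau>)) face_of (convex hull (nu ` pt v ` cube d n))"
proof
  fix \<tau> assume \<tau>: "\<tau> \<in> patterns d n"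
  have line: "span_line v \<tau> \<inter> pt v ` cube d n = pt v ` comb_line d \<tau>"
    using lines \<tau> by blast
  obtain g :: "real^5 \<Rightarrow> real" where g: "affine_fun g"
    and zero: "\<forall>q\<in>nu ` pt v ` comb_line d \<tau>. g q = 0"
    and positive: "\<forall>q\<in>nu ` (pt v ` cube d n - pt v ` comb_line d \<tau>). g q > 0"
    using \<tau> pos line by (rule comb_line_separating_affine_fun)
  have "(convex hull (nu ` pt v ` comb_line d \<tau>)) face_of (convex hull (nu ` pt v ` cube d n))"
  proof (rule face_of_convex_hull_zero_set[OF _ _ g zero])
    show "finite (nu ` pt v ` cube d n)"
      using finite_cube by simp
    show "nu ` pt v ` comb_line d \<tau> \<subseteq> nu ` pt v ` cube d n"
      using comb_line_subset_cube[OF \<tau>] by (intro image_mono)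
    show "\<forall>q\<in>nu ` pt v ` cube d n - nu ` pt v ` comb_line d \<tau>. g q > 0"
      using positive by blast
  qed
  with g zero positive show "(\<exists>g :: real ^ 5 \<Rightarrow> real. affine_fun g
              \<and> (\<forall>q\<in>nu ` pt v ` comb_line d \<tau>. g q = 0)
              \<and> (\<forall>q\<in>nu ` (pt v ` cube d n - pt v ` comb_line d \<tau>). g q > 0))
         \<and> (convex hull (nu ` pt v ` comb_line d \<tau>)) face_of (convex hull (nu ` pt v ` cube d n))"
    by blast
qed

end
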